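(* In the setting below, suppose the step size satisfies $0<\eta\le \frac{1}{L(K+1)}$. Then for every $k\ge 0$ the iterates of the PIAG method satisfy \[ F_{k+1}\le F_k-\frac{1}{2}\eta\|d_k\|^2+\eta^2\frac{L}{2}\sum_{j=(k-K)_+}^{k-1}\|d_j\|^2 . \]
   Context: Let $m,n\ge 1$ be integers and $\|\cdot\|$ the Euclidean norm on $\mathbb{R}^n$. For $i=1,\dots,m$, let $f_i:\mathbb{R}^n\to\mathbb{R}$ be continuously differentiable with $\|\nabla f_i(x)-\nabla f_i(y)\|\le L_i\|x-y\|$ for all $x,y$, where $L_i\ge 0$ (the $f_i$ are not assumed convex). Let $f=\frac1m\sum_{i=1}^m f_i$ and $L=\frac1m\sum_{i=1}^m L_i$. Assume $f$ is $\mu$-strongly convex for some $\mu>0$ (i.e. $x\mapsto f(x)-\frac{\mu}{2}\|x\|^2$ is convex). Let $r:\mathbb{R}^n\to(-\infty,\infty]$ be proper, closed and convex, let $F=f+r$, and let $x^*$ be the unique minimizer of $F$. For $\eta>0$ define $\mathrm{prox}_r^\eta(y)=\arg\min_{x\in\mathbb{R}^n}\{\frac12\|x-y\|^2+\eta r(x)\}$. PIAG method: fix an integer $K\ge 0$, a step size $\eta>0$ and $x_0\in\mathbb{R}^n$; for each $k\ge0$ and each $i$ let $\tau_{i,k}$ be any (deterministically chosen) integer with $\max(k-K,0)\le\tau_{i,k}\le k$; set $g_k=\frac1m\sum_{i=1}^m\nabla f_i(x_{\tau_{i,k}})$ and $x_{k+1}=\mathrm{prox}_r^\eta(x_k-\eta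 g_k)$. Define $d_k=(x_{k+1}-x_k)/\eta$ (equivalently $d_k=-g_k-h_{k+1}$, where $h_{k+1}\in\partial r(x_{k+1})$ is given by the optimality condition of the proximal step), and $F_k=F(x_k)-F(x^* )$. Write $(t)_+=\max(t,0)$; empty sums are zero. *)

theory Defs
  imports "HOL-Analysis.Analysis" "HOL-Library.Extended_Real"
begin

definition proper_fun :: "('a \<Rightarrow> ereal) \<Rightarrow> bool" where
  "proper_fun r \<longleftrightarrow> (\<forall>x. r x \<noteq> -\<infinity>) \<and> (\<exists>x. r x \<noteq> \<infinity>)"

definition epigraph_e :: "('a \<Rightarrow> ereal) \<Rightarrow> ('a \<times> real) set" where
  "epigraph_e r = {(x, t). r x \<le> ereal t}"

definition closed_fun :: "('a::topological_space \<Rightarrow> ereal) \<Rightarrow> bool" where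
  "closed_fun r \<longleftrightarrow> closed (epigraph_e r)"

definition convex_fun :: "('a::real_vector \<Rightarrow> ereal) \<Rightarrow> bool" where
  "convex_fun r \<longleftrightarrow> convex (epigraph_e r)"

definition is_prox :: "('a::real_normed_vector \<Rightarrow> ereal) \<Rightarrow> real \<Rightarrow> 'a \<Rightarrow> 'a \<Rightarrow> bool" where
  "is_prox r \<eta> y p \<longleftrightarrow>
     (\<forall>z. ereal (norm (p - y)^2 / 2) + ereal \<eta> * r p \<le> ereal (norm (z - y)^2 / 2) + ereal \<eta> * r z)"

end

theory Submission
  imports Defs
begin

text \<open>Write D for the step x(k+1) - x(k). By the descent lemma for each f_i, taken with the
  stale gradient at x(\<tau> i k), the smooth part grows by at most <g_k, D> + L/2 |D|^2 plus a delay
  error L_i |x(k) - x(\<tau> i k)| |D|; the delay is at most the sum of the last K steps, and AM-GM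
  bounds the error by L/2 (\<Sum> |x(j+1) - x(j)|^2 + K |D|^2). The variational inequality of the
  proximal step bounds the growth of r by -<g_k, D> - |D|^2/\<eta>, which cancels the gradient term,
  and \<eta> L (K+1) \<le> 1 lets -|D|^2/\<eta> absorb L (K+1)/2 |D|^2 up to -|D|^2/(2\<eta>).\<close>

lemma real_le_of_le_add_small_multiple:
  fixes a b c :: real
  assumes "\<And>t. 0 < t \<Longrightarrow> t < 1 \<Longrightarrow> a \<le> b + t * c"
  shows "a \<le> b"
proof (rule tendsto_lowerbound)
  show "((\<lambda>t. b + t * c) \<longlongrightarrow> b) (at_right 0)"
    by (rule tendsto_eq_intros | simp)+
  show "\<forall>\<^sub>F t in at_right 0. a \<le> b + t * c"
    using eventually_at_right_real[of 0 1] by (rule eventually_mono) (auto intro: assms)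
qed simp

lemma norm_add_scaleR_power2:
  fixes v w :: "'a::real_inner"
  shows "norm (v + t *\<^sub>R w)^2 = norm v^2 + 2 * t * (v \<bullet> w) + t^2 * norm w^2"
  by (simp only: power2_norm_eq_inner)
    (simp add: inner_add_left inner_add_right inner_commute
      power2_eq_square algebra_simps)

lemma mult_sum_le_half_sum_squares:
  fixes u :: real and v :: "'b \<Rightarrow> real"
  shows "u * (\<Sum>j\<in>A. v j) \<le> ((\<Sum>j\<in>A. v j^2) + real (card A) * u^2) / 2"
proof -
  have "u * v j \<le> (v j^2 + u^2) / 2" for j
    using sum_squares_bound[of u "v j"] by (simp add: algebra_simps)
  then have "(\<Sum>j\<in>A. u * v j) \<le> (\<Sum>j\<in>A. (v j^2 + u^2) / 2)"
    by (rule sum_mono)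
  then show ?thesis
    by (simp add: sum_distrib_left[symmetric] sum.distrib sum_divide_distrib[symmetric])
qed

lemma norm_diff_le_sum_norm_steps:
  fixes x :: "nat \<Rightarrow> 'a::real_normed_vector"
  assumes "a \<le> t" "t \<le> k"
  shows "norm (x k - x t) \<le> (\<Sum>j = a..<k. norm (x (Suc j) - x j))"
proof -
  have "norm (x k - x t) = norm (\<Sum>j = t..<k. x (Suc j) - x j)"
    using assms(2) by (simp add: sum_Suc_diff')
  also have "\<dots> \<le> (\<Sum>j = t..<k. norm (x (Suc j) - x j))"
    by (rule norm_sum)
  also have "\<dots> \<le> (\<Sum>j = a..<k. norm (x (Suc j) - x j))"
    using assms(1) by (intro sum_mono2) auto
  finally show ?thesis .
qed

lemma descent_lemma:
  fixes \<phi> :: "'a::real_inner \<Rightarrow> real" and G :: "'a \<Rightarrow> 'a"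
  assumes der: "\<And>y. (\<phi> has_derivative (\<lambda>h. G y \<bullet> h)) (at y)"
    and lip: "\<And>y z. norm (G y - G z) \<le> c * norm (y - z)"
  shows "\<phi> y \<le> \<phi> x + G x \<bullet> (y - x) + c / 2 * norm (y - x)^2"
proof -
  define h where "h = y - x"
  define \<psi> where "\<psi> = (\<lambda>t. \<phi> (x + t *\<^sub>R h) - t * (G x \<bullet> h) - c / 2 * t^2 * norm h^2)"
  have \<psi>_deriv: "(\<psi> has_real_derivative G (x + t *\<^sub>R h) \<bullet> h - G x \<bullet> h - c * t * norm h^2) (at t)"
    for t
  proof -
    have "((\<lambda>t. \<phi> (x + t *\<^sub>R h)) has_derivative (\<lambda>s. G (x + t *\<^sub>R h) \<bullet> (s *\<^sub>R h))) (at t)"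
      by (rule has_derivative_compose[OF _ der]) (auto intro!: derivative_eq_intros)
    then have \<phi>_line: "((\<lambda>t. \<phi> (x + t *\<^sub>R h)) has_real_derivative G (x + t *\<^sub>R h) \<bullet> h) (at t)"
      by (simp add: has_field_derivative_def mult.commute[of _ "G (x + t *\<^sub>R h) \<bullet> h"])
    show ?thesis
      unfolding \<psi>_def by (rule derivative_eq_intros \<phi>_line | simp)+
  qed
  have "\<psi> 1 \<le> \<psi> 0"
  proof (rule DERIV_nonpos_imp_nonincreasing[of 0 1])
    fix t :: real
    assume t: "0 \<le> t" "t \<le> 1"
    have "(G (x + t *\<^sub>R h) - G x) \<bullet> h \<le> norm (G (x + t *\<^sub>R h) - G x) * norm h"
      by (rule norm_cauchy_schwarz)
    also have "\<dots> \<le> c * norm (t *\<^sub>R h) * norm h"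
      using lip[of "x + t *\<^sub>R h" x] by (intro mult_right_mono) auto
    also have "\<dots> = c * t * norm h^2"
      using t by (simp add: power2_eq_square)
    finally show "\<exists>D. (\<psi> has_real_derivative D) (at t) \<and> D \<le> 0"
      using \<psi>_deriv[of t] by (auto simp: inner_diff_left)
  qed simp
  then show ?thesis
    unfolding \<psi>_def h_def by (simp add: algebra_simps)
qed

lemma descent_lemma_delayed:
  fixes \<phi> :: "'a::real_inner \<Rightarrow> real" and G :: "'a \<Rightarrow> 'a"
  assumes der: "\<And>y. (\<phi> has_derivative (\<lambda>h. G y \<bullet> h)) (at y)"
    and lip: "\<And>y z. norm (G y - G z) \<le> c * norm (y - z)"
  shows "\<phi> y \<le> \<phi> x + G w \<bullet> (y - x) + c / 2 * norm (y - x)^2 + c * norm (x - w) * norm (y - x)"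
proof -
  have "(G x - G w) \<bullet> (y - x) \<le> norm (G x - G w) * norm (y - x)"
    by (rule norm_cauchy_schwarz)
  also have "\<dots> \<le> c * norm (x - w) * norm (y - x)"
    using lip by (intro mult_right_mono) auto
  finally show ?thesis
    using descent_lemma[OF der lip, of y x] by (simp add: inner_diff_left)
qed

lemma average_descent_delayed:
  fixes \<phi> :: "nat \<Rightarrow> 'a::real_inner \<Rightarrow> real" and G :: "nat \<Rightarrow> 'a \<Rightarrow> 'a"
    and c :: "nat \<Rightarrow> real" and w :: "nat \<Rightarrow> 'a"
  assumes der: "\<And>i y. i < m \<Longrightarrow> (\<phi> i has_derivative (\<lambda>h. G i y \<bullet> h)) (at y)"
    and lip: "\<And>i y z. i < m \<Longrightarrow> norm (G i y - G i z) \<le> c i * norm (y - z)"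
    and c_nonneg: "\<And>i. i < m \<Longrightarrow> 0 \<le> c i"
    and delay: "\<And>i. i < m \<Longrightarrow> norm (x - w i) \<le> \<delta>"
  shows "(\<Sum>i<m. \<phi> i y) / m \<le> (\<Sum>i<m. \<phi> i x) / m
      + ((1 / real m) *\<^sub>R (\<Sum>i<m. G i (w i))) \<bullet> (y - x)
      + (\<Sum>i<m. c i) / m / 2 * norm (y - x)^2 + (\<Sum>i<m. c i) / m * \<delta> * norm (y - x)"
proof -
  have "\<phi> i y \<le> \<phi> i x + G i (w i) \<bullet> (y - x) + c i / 2 * norm (y - x)^2 + c i * \<delta> * norm (y - x)"
    if i: "i < m" for i
  proof -
    have "c i * norm (x - w i) * norm (y - x) \<le> c i * \<delta> * norm (y - x)"
      using c_nonneg[OF i] delay[OF i] by (intro mult_right_mono mult_left_mono) auto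
    then show ?thesis
      using descent_lemma_delayed[OF der[OF i] lip[OF i], of y x "w i"] by linarith
  qed
  then have "(\<Sum>i<m. \<phi> i y) \<le> (\<Sum>i<m. \<phi> i x + G i (w i) \<bullet> (y - x) + c i / 2 * norm (y - x)^2
      + c i * \<delta> * norm (y - x))"
    by (intro sum_mono) auto
  then have "(\<Sum>i<m. \<phi> i y) / m \<le> (\<Sum>i<m. \<phi> i x + G i (w i) \<bullet> (y - x) + c i / 2 * norm (y - x)^2
      + c i * \<delta> * norm (y - x)) / m"
    by (rule divide_right_mono) simp
  then show ?thesis
    by (simp add: sum.distrib sum_distrib_right inner_sum_left add_divide_distrib
        sum_divide_distrib[symmetric])
qed

lemma prox_finite:
  assumes prox: "is_prox r \<eta> y p" and eta: "0 < \<eta>"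
    and r_finite_below: "\<And>x. r x \<noteq> -\<infinity>" and rz: "r z \<noteq> \<infinity>"
  shows "r p \<noteq> \<infinity>"
proof
  assume "r p = \<infinity>"
  then have "ereal (norm (p - y)^2 / 2) + ereal \<eta> * r p = \<infinity>"
    using eta by simp
  moreover have "ereal (norm (z - y)^2 / 2) + ereal \<eta> * r z \<noteq> \<infinity>"
    using rz r_finite_below[of z] eta by (cases "r z") auto
  ultimately show False
    using prox unfolding is_prox_def by (metis ereal_infty_less_eq(1))
qed

lemma prox_variational_inequality:
  fixes r :: "'a::real_inner \<Rightarrow> ereal"
  assumes conv: "convex_fun r" and prox: "is_prox r \<eta> y p" and eta: "0 < \<eta>"
    and rp: "r p = ereal a" and rz: "r z = ereal b"
  shows "\<eta> * a \<le> (p - y) \<bullet> (z - p) + \<eta> * b"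
proof (rule real_le_of_le_add_small_multiple)
  fix t :: real
  assume t: "0 < t" "t < 1"
  define zt where "zt = (1 - t) *\<^sub>R p + t *\<^sub>R z"
  have "(p, a) \<in> epigraph_e r" "(z, b) \<in> epigraph_e r"
    unfolding epigraph_e_def using rp rz by auto
  then have "(1 - t) *\<^sub>R (p, a) + t *\<^sub>R (z, b) \<in> epigraph_e r"
    using conv t unfolding convex_fun_def by (intro convexD) auto
  then have r_zt: "r zt \<le> ereal ((1 - t) * a + t * b)"
    unfolding epigraph_e_def zt_def by simp
  have "ereal (norm (p - y)^2 / 2 + \<eta> * a) = ereal (norm (p - y)^2 / 2) + ereal \<eta> * r p"
    using rp by simp
  also have "\<dots> \<le> ereal (norm (zt - y)^2 / 2) + ereal \<eta> * r zt"
    using prox unfolding is_prox_def by blast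
  also have "\<dots> \<le> ereal (norm (zt - y)^2 / 2) + ereal \<eta> * ereal ((1 - t) * a + t * b)"
    using r_zt eta by (intro add_left_mono ereal_mult_left_mono) auto
  finally have "norm (p - y)^2 / 2 + \<eta> * a \<le> norm (zt - y)^2 / 2 + \<eta> * ((1 - t) * a + t * b)"
    by simp
  moreover have "zt - y = (p - y) + t *\<^sub>R (z - p)"
    unfolding zt_def by (simp add: algebra_simps)
  then have "norm (zt - y)^2 = norm (p - y)^2 + 2 * t * ((p - y) \<bullet> (z - p)) + t^2 * norm (z - p)^2"
    by (simp only: norm_add_scaleR_power2)
  ultimately have "t * (\<eta> * a) \<le> t * ((p - y) \<bullet> (z - p) + \<eta> * b + t * (norm (z - p)^2 / 2))"
    by (simp add: algebra_simps power2_eq_square)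
  then show "\<eta> * a \<le> (p - y) \<bullet> (z - p) + \<eta> * b + t * (norm (z - p)^2 / 2)"
    using t by simp
qed

lemma prox_gradient_step:
  fixes r :: "'a::real_inner \<Rightarrow> ereal"
  assumes conv: "convex_fun r" and prox: "is_prox r \<eta> (z - \<eta> *\<^sub>R v) p" and eta: "0 < \<eta>"
    and rp: "r p = ereal b" and rz: "r z = ereal a"
  shows "b \<le> a - v \<bullet> (p - z) - norm (p - z)^2 / \<eta>"
proof -
  have "\<eta> * b \<le> (p - (z - \<eta> *\<^sub>R v)) \<bullet> (z - p) + \<eta> * a"
    by (rule prox_variational_inequality[OF conv prox eta rp rz])
  also have "\<dots> = - (norm (p - z)^2) - \<eta> * (v \<bullet> (p - z)) + \<eta> * a"
    by (simp add: power2_norm_eq_inner inner_diff_left inner_diff_right inner_commute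
        algebra_simps)
  also have "\<dots> = \<eta> * (a - v \<bullet> (p - z) - norm (p - z)^2 / \<eta>)"
    using eta by (simp add: field_simps)
  finally show ?thesis
    using eta by simp
qed

lemma proper_plus_minimum_finite:
  fixes f :: "'a \<Rightarrow> real"
  assumes r_proper: "proper_fun r" and min: "\<And>y. ereal (f x) + r x \<le> ereal (f y) + r y"
  shows "\<exists>c. ereal (f x) + r x = ereal c"
proof -
  obtain y where "r y \<noteq> \<infinity>"
    using r_proper unfolding proper_fun_def by blast
  moreover have "r x \<noteq> -\<infinity>" "r y \<noteq> -\<infinity>"
    using r_proper unfolding proper_fun_def by blast+
  ultimately show ?thesis
    using min[of y] by (cases "r x"; cases "r y") auto
qed

lemma PIAG_smooth_descent:
  fixes fi :: "nat \<Rightarrow> 'a::real_inner \<Rightarrow> real" and gi :: "nat \<Rightarrow> 'a \<Rightarrow> 'a"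
    and x :: "nat \<Rightarrow> 'a" and \<tau> :: "nat \<Rightarrow> nat"
  assumes f_def: "f = (\<lambda>y. (\<Sum>i<m. fi i y) / real m)"
    and L_def: "L = (\<Sum>i<m. Li i) / real m"
    and v_def: "v = (1 / real m) *\<^sub>R (\<Sum>i<m. gi i (x (\<tau> i)))"
    and grad: "\<And>i y. i < m \<Longrightarrow> (fi i has_derivative (\<lambda>h. gi i y \<bullet> h)) (at y)"
    and Lip: "\<And>i y z. i < m \<Longrightarrow> norm (gi i y - gi i z) \<le> Li i * norm (y - z)"
    and Li_nonneg: "\<And>i. i < m \<Longrightarrow> 0 \<le> Li i"
    and delay: "\<And>i. i < m \<Longrightarrow> k - K \<le> \<tau> i \<and> \<tau> i \<le> k"
  shows "f (x (Suc k)) \<le> f (x k) + v \<bullet> (x (Suc k) - x k)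
      + L * (real K + 1) / 2 * norm (x (Suc k) - x k)^2
      + L / 2 * (\<Sum>j = k - K..<k. norm (x (Suc j) - x j)^2)"
proof -
  define D where "D j = x (Suc j) - x j" for j
  define \<delta> where "\<delta> = (\<Sum>j = k - K..<k. norm (D j))"
  have "norm (x k - x (\<tau> i)) \<le> \<delta>" if "i < m" for i
    unfolding \<delta>_def D_def using delay[OF that] by (intro norm_diff_le_sum_norm_steps) auto
  from average_descent_delayed[OF grad Lip Li_nonneg this]
  have descent: "f (x (Suc k)) \<le> f (x k) + v \<bullet> D k + L / 2 * norm (D k)^2 + L * \<delta> * norm (D k)"
    unfolding f_def L_def v_def D_def .
  have "\<delta> * norm (D k) \<le> ((\<Sum>j = k - K..<k. norm (D j)^2) + real K * norm (D k)^2) / 2"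
  proof -
    have "norm (D k) * \<delta>
        \<le> ((\<Sum>j = k - K..<k. norm (D j)^2) + real (card {k - K..<k}) * norm (D k)^2) / 2"
      unfolding \<delta>_def by (rule mult_sum_le_half_sum_squares)
    moreover have "real (card {k - K..<k}) * norm (D k)^2 \<le> real K * norm (D k)^2"
      by (intro mult_right_mono) auto
    ultimately show ?thesis
      by (simp add: mult.commute)
  qed
  moreover have "0 \<le> L"
    unfolding L_def using Li_nonneg by (auto intro!: divide_nonneg_nonneg sum_nonneg)
  ultimately have "L * (\<delta> * norm (D k))
      \<le> L * (((\<Sum>j = k - K..<k. norm (D j)^2) + real K * norm (D k)^2) / 2)"
    by (rule mult_left_mono)
  with descent have "f (x (Suc k)) \<le> f (x k) + v \<bullet> D k + L * (real K + 1) / 2 * norm (D k)^2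
      + L / 2 * (\<Sum>j = k - K..<k. norm (D j)^2)"
    by (simp add: algebra_simps add_divide_distrib)
  then show ?thesis
    unfolding D_def .
qed

theorem lemma1:
  fixes fi :: "nat \<Rightarrow> 'a::euclidean_space \<Rightarrow> real"
    and gi :: "nat \<Rightarrow> 'a \<Rightarrow> 'a"
    and Li :: "nat \<Rightarrow> real"
    and m K :: nat and \<mu> \<eta> :: real
    and r :: "'a \<Rightarrow> ereal"
    and xs :: 'a
    and x :: "nat \<Rightarrow> 'a"
    and \<tau> :: "nat \<Rightarrow> nat \<Rightarrow> nat"
    and f :: "'a \<Rightarrow> real" and L :: real and F :: "'a \<Rightarrow> ereal"
    and g d :: "nat \<Rightarrow> 'a" and Fk :: "nat \<Rightarrow> ereal"
  assumes f_def: "f = (\<lambda>y. (\<Sum>i<m. fi i y) / real m)"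
    and L_def: "L = (\<Sum>i<m. Li i) / real m"
    and F_def: "F = (\<lambda>y. ereal (f y) + r y)"
    and g_def: "g = (\<lambda>k. (1 / real m) *\<^sub>R (\<Sum>i<m. gi i (x (\<tau> i k))))"
    and d_def: "d = (\<lambda>k. (1 / \<eta>) *\<^sub>R (x (Suc k) - x k))"
    and Fk_def: "Fk = (\<lambda>k. F (x k) - F xs)"
    and m_pos: "m \<ge> 1"
    and grad: "\<And>i y. i < m \<Longrightarrow> (fi i has_derivative (\<lambda>h. gi i y \<bullet> h)) (at y)"
    and grad_cont: "\<And>i. i < m \<Longrightarrow> continuous_on UNIV (gi i)"
    and Lip: "\<And>i y z. i < m \<Longrightarrow> norm (gi i y - gi i z) \<le> Li i * norm (y - z)"
    and Li_nonneg: "\<And>i. i < m \<Longrightarrow> Li i \<ge> 0"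
    and mu_pos: "\<mu> > 0"
    and strongly_convex: "convex_on UNIV (\<lambda>y. f y - \<mu> / 2 * norm y ^ 2)"
    and r_proper: "proper_fun r" and r_closed: "closed_fun r" and r_convex: "convex_fun r"
    and xs_min: "\<And>y. F xs \<le> F y"
    and tau: "\<And>i k. i < m \<Longrightarrow> k - K \<le> \<tau> i k \<and> \<tau> i k \<le> k"
    and step: "\<And>k. is_prox r \<eta> (x k - \<eta> *\<^sub>R g k) (x (Suc k))"
    and eta_pos: "0 < \<eta>"
    and eta_le: "\<eta> * (L * (real K + 1)) \<le> 1"
  shows "Fk (Suc k) \<le> Fk k - ereal (\<eta> / 2 * norm (d k)^2)
            + ereal (\<eta>^2 * L / 2 * (\<Sum>j\<in>{k - K..<k}. norm (d j)^2))"
proof -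
  have r_finite_below: "\<And>y. r y \<noteq> -\<infinity>"
    using r_proper unfolding proper_fun_def by blast
  obtain c where Fxs: "F xs = ereal c"
    using proper_plus_minimum_finite[OF r_proper] xs_min unfolding F_def by blast
  show ?thesis
  proof (cases "r (x k) = \<infinity>")
    case True
    then show ?thesis
      unfolding Fk_def F_def using Fxs by simp
  next
    case False
    then obtain a where ra: "r (x k) = ereal a"
      using r_finite_below[of "x k"] by (cases "r (x k)") auto
    obtain b where rb: "r (x (Suc k)) = ereal b"
      using prox_finite[OF step eta_pos r_finite_below False] r_finite_below[of "x (Suc k)"]
      by (cases "r (x (Suc k))") auto
    have step_eq: "x (Suc j) - x j = \<eta> *\<^sub>R d j" for j
      unfolding d_def using eta_pos by simp
    have smooth: "f (x (Suc k)) \<le> f (x k) + g k \<bullet> (\<eta> *\<^sub>R d k)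
        + L * (real K + 1) / 2 * norm (\<eta> *\<^sub>R d k)^2
        + L / 2 * (\<Sum>j = k - K..<k. norm (\<eta> *\<^sub>R d j)^2)"
      using PIAG_smooth_descent[OF f_def L_def _ grad Lip Li_nonneg, of "g k" x "\<lambda>i. \<tau> i k"]
        tau g_def unfolding step_eq by blast
    have nonsmooth: "b \<le> a - g k \<bullet> (\<eta> *\<^sub>R d k) - norm (\<eta> *\<^sub>R d k)^2 / \<eta>"
      using prox_gradient_step[OF r_convex step eta_pos rb ra] unfolding step_eq .
    have "\<eta> * (L * (real K + 1)) * (\<eta> * norm (d k)^2) \<le> \<eta> * norm (d k)^2"
      using mult_right_mono[OF eta_le, of "\<eta> * norm (d k)^2"] eta_pos by simp
    with smooth nonsmooth eta_pos have "f (x (Suc k)) + b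
        \<le> f (x k) + a - \<eta> / 2 * norm (d k)^2 + \<eta>^2 * L / 2 * (\<Sum>j = k - K..<k. norm (d j)^2)"
      by (simp add: power_mult_distrib sum_distrib_left[symmetric] power2_eq_square field_simps)
    moreover have "F (x k) = ereal (f (x k) + a)" "F (x (Suc k)) = ereal (f (x (Suc k)) + b)"
      unfolding F_def using ra rb by simp_all
    ultimately show ?thesis
      unfolding Fk_def Fxs by simp
  qed
qed

end
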